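(* Let $G$ be a connected non-complete graph. If $\mu_t(G)=n(G)-\operatorname{diam}(G)+1$, then $\gamma_c(G)=\operatorname{diam}(G)-1$.
   Context: All graphs are finite, simple and undirected; $n(G)$ denotes the order of $G$ and $\operatorname{diam}(G)$ its diameter. The connected domination number $\gamma_c(G)$ is the minimum cardinality of a dominating set $D$ of $G$ such that the induced subgraph $G[D]$ is connected. Let $G$ be a connected graph and $X\subseteq V(G)$. Two vertices $x,y\in V(G)$ are $X$-visible if there exists a shortest $x,y$-path in $G$ none of whose internal vertices (i.e., vertices other than $x$ and $y$) belongs to $X$. The set $X$ is a total mutual-visibility set of $G$ if every two vertices of $G$ are $X$-visible (the empty set is allowed). The total mutual-visibility number $\mu_t(G)$ is the maximum cardinality of a total mutual-visibility set of $G$. *)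

theory Defs
  imports Main
begin

definition simple_graph :: "'a set \<Rightarrow> ('a \<Rightarrow> 'a \<Rightarrow> bool) \<Rightarrow> bool" where
  "simple_graph V E \<longleftrightarrow> finite V \<and> (\<forall>x y. E x y \<longrightarrow> x \<in> V \<and> y \<in> V)
     \<and> (\<forall>x y. E x y \<longrightarrow> E y x) \<and> (\<forall>x. \<not> E x x)"

definition is_path :: "'a set \<Rightarrow> ('a \<Rightarrow> 'a \<Rightarrow> bool) \<Rightarrow> 'a list \<Rightarrow> bool" where
  "is_path V E p \<longleftrightarrow> p \<noteq> [] \<and> set p \<subseteq> V \<and> distinct p \<and> successively E p"

definition path_between :: "'a set \<Rightarrow> ('a \<Rightarrow> 'a \<Rightarrow> bool) \<Rightarrow> 'a \<Rightarrow> 'a \<Rightarrow> 'a list \<Rightarrow> bool" where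
  "path_between V E x y p \<longleftrightarrow> is_path V E p \<and> hd p = x \<and> last p = y"

definition graph_connected :: "'a set \<Rightarrow> ('a \<Rightarrow> 'a \<Rightarrow> bool) \<Rightarrow> bool" where
  "graph_connected V E \<longleftrightarrow> V \<noteq> {} \<and> (\<forall>x\<in>V. \<forall>y\<in>V. \<exists>p. path_between V E x y p)"

definition dist :: "'a set \<Rightarrow> ('a \<Rightarrow> 'a \<Rightarrow> bool) \<Rightarrow> 'a \<Rightarrow> 'a \<Rightarrow> nat" where
  "dist V E x y = (LEAST k. \<exists>p. path_between V E x y p \<and> length p = k + 1)"

definition diam :: "'a set \<Rightarrow> ('a \<Rightarrow> 'a \<Rightarrow> bool) \<Rightarrow> nat" where
  "diam V E = Max {dist V E x y | x y. x \<in> V \<and> y \<in> V}"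

definition shortest_path :: "'a set \<Rightarrow> ('a \<Rightarrow> 'a \<Rightarrow> bool) \<Rightarrow> 'a \<Rightarrow> 'a \<Rightarrow> 'a list \<Rightarrow> bool" where
  "shortest_path V E x y p \<longleftrightarrow> path_between V E x y p \<and> length p = dist V E x y + 1"

definition complete_graph :: "'a set \<Rightarrow> ('a \<Rightarrow> 'a \<Rightarrow> bool) \<Rightarrow> bool" where
  "complete_graph V E \<longleftrightarrow> (\<forall>x\<in>V. \<forall>y\<in>V. x \<noteq> y \<longrightarrow> E x y)"

text \<open>Internal vertices of a path p = [x, ..., y] are those of butlast (tl p).\<close>
definition X_visible :: "'a set \<Rightarrow> ('a \<Rightarrow> 'a \<Rightarrow> bool) \<Rightarrow> 'a set \<Rightarrow> 'a \<Rightarrow> 'a \<Rightarrow> bool" where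
  "X_visible V E X x y \<longleftrightarrow> (\<exists>p. shortest_path V E x y p \<and> (\<forall>v\<in>set (butlast (tl p)). v \<notin> X))"

definition total_mutual_visibility_set :: "'a set \<Rightarrow> ('a \<Rightarrow> 'a \<Rightarrow> bool) \<Rightarrow> 'a set \<Rightarrow> bool" where
  "total_mutual_visibility_set V E X \<longleftrightarrow> X \<subseteq> V \<and> (\<forall>x\<in>V. \<forall>y\<in>V. X_visible V E X x y)"

definition mu_t :: "'a set \<Rightarrow> ('a \<Rightarrow> 'a \<Rightarrow> bool) \<Rightarrow> nat" where
  "mu_t V E = Max {card X | X. total_mutual_visibility_set V E X}"

definition dominating_set :: "'a set \<Rightarrow> ('a \<Rightarrow> 'a \<Rightarrow> bool) \<Rightarrow> 'a set \<Rightarrow> bool" where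
  "dominating_set V E D \<longleftrightarrow> D \<subseteq> V \<and> (\<forall>v\<in>V. v \<in> D \<or> (\<exists>u\<in>D. E u v))"

definition induced_edges :: "('a \<Rightarrow> 'a \<Rightarrow> bool) \<Rightarrow> 'a set \<Rightarrow> 'a \<Rightarrow> 'a \<Rightarrow> bool" where
  "induced_edges E D = (\<lambda>x y. E x y \<and> x \<in> D \<and> y \<in> D)"

definition connected_dominating_set :: "'a set \<Rightarrow> ('a \<Rightarrow> 'a \<Rightarrow> bool) \<Rightarrow> 'a set \<Rightarrow> bool" where
  "connected_dominating_set V E D \<longleftrightarrow> dominating_set V E D \<and> graph_connected D (induced_edges E D)"

definition gamma_c :: "'a set \<Rightarrow> ('a \<Rightarrow> 'a \<Rightarrow> bool) \<Rightarrow> nat" where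
  "gamma_c V E = Min {card D | D. connected_dominating_set V E D}"

end

theory Submission
  imports Defs
begin

text \<open>If X is a total mutual-visibility set of a non-complete graph, then V - X is a connected
dominating set: a shortest path avoiding X internally joins any two vertices of V - X inside
V - X, and every vertex with a non-neighbour sees it along a shortest path whose second vertex is
a neighbour outside X. Hence \<open>\<gamma>\<^sub>c \<le> n - \<mu>\<^sub>t = diam - 1\<close>. Conversely, walking from x to a dominator
of x, through a connected dominating set C, and on to y shows \<open>diam \<le> |C| + 1\<close>.\<close>

lemma dist_le_length:
  assumes "path_between V E x y p"
  shows "dist V E x y \<le> length p - 1"
proof -
  have "p \<noteq> []" using assms by (auto simp: path_between_def is_path_def)
  hence "\<exists>q. path_between V E x y q \<and> length q = (length p - 1) + 1" using assms by auto
  thus ?thesis unfolding dist_def by (rule Least_le)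
qed

lemma shortest_path_exists:
  assumes "path_between V E x y p"
  shows "\<exists>q. shortest_path V E x y q"
proof -
  have "p \<noteq> []" using assms by (auto simp: path_between_def is_path_def)
  hence "\<exists>q. path_between V E x y q \<and> length q = (length p - 1) + 1" using assms by auto
  hence "\<exists>q. path_between V E x y q
             \<and> length q = (LEAST k. \<exists>q. path_between V E x y q \<and> length q = k + 1) + 1"
    by (rule LeastI)
  thus ?thesis unfolding shortest_path_def dist_def by blast
qed

lemma path_between_suffix:
  assumes "path_between V E x y p" "z \<in> set p"
  shows "\<exists>q. path_between V E z y q \<and> length q \<le> length p"
proof -
  obtain xs ys where p: "p = xs @ z # ys" using assms(2) split_list by metis
  have "path_between V E z y (z # ys)"
    using assms(1) unfolding p path_between_def is_path_def
    by (auto simp: successively_append_iff)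
  thus ?thesis using p by auto
qed

lemma path_between_rev:
  assumes "symp E" "path_between V E x y p"
  shows "path_between V E y x (rev p)"
  using assms
  by (auto simp: path_between_def is_path_def hd_rev last_rev symp_def intro: successively_mono)

lemma path_between_induced_iff:
  assumes "D \<subseteq> V"
  shows "path_between D (induced_edges E D) x y p \<longleftrightarrow> path_between V E x y p \<and> set p \<subseteq> D"
proof -
  have "successively (induced_edges E D) p \<longleftrightarrow> successively E p" if "set p \<subseteq> D"
    using that by (induction p rule: induct_list012) (auto simp: induced_edges_def)
  thus ?thesis using assms
    by (auto simp: path_between_def is_path_def induced_edges_def intro: successively_mono)
qed

text \<open>Prepending a neighbour lengthens a shortest path by at most one edge; if the neighbour
already lies on the path, a suffix does even better.\<close>

lemma dist_neighbour_le:
  assumes "E z x" "z \<in> V" "path_between V E x y p"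
  shows "dist V E z y \<le> dist V E x y + 1"
proof -
  obtain q where q: "path_between V E x y q" "length q = dist V E x y + 1"
    using shortest_path_exists[OF assms(3)] by (auto simp: shortest_path_def)
  show ?thesis
  proof (cases "z \<in> set q")
    case True
    then obtain r where "path_between V E z y r" "length r \<le> length q"
      using path_between_suffix[OF q(1)] by blast
    thus ?thesis using dist_le_length[of V E z y r] q(2) by auto
  next
    case False
    have "path_between V E z y (z # q)"
      using q(1) False assms(1,2) unfolding path_between_def is_path_def by (cases q) auto
    thus ?thesis using dist_le_length[of V E z y "z # q"] q(2) by auto
  qed
qed

lemma dist_commute:
  assumes "symp E" "path_between V E x y p"
  shows "dist V E x y = dist V E y x"
proof -
  have le: "dist V E b a \<le> dist V E a b" if ab: "path_between V E a b r" for a b r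
  proof -
    obtain q where "shortest_path V E a b q" using shortest_path_exists[OF ab] by blast
    thus ?thesis
      using dist_le_length[OF path_between_rev[OF assms(1)]] by (force simp: shortest_path_def)
  qed
  show ?thesis using le[OF assms(2)] le[OF path_between_rev[OF assms]] by simp
qed

lemma diam_attained:
  assumes "finite V" "V \<noteq> {}"
  obtains x y where "x \<in> V" "y \<in> V" "diam V E = dist V E x y"
proof -
  let ?Ds = "{dist V E x y | x y. x \<in> V \<and> y \<in> V}"
  have "?Ds \<subseteq> (\<lambda>(x, y). dist V E x y) ` (V \<times> V)" by auto
  hence "finite ?Ds" using assms(1) finite_subset by blast
  moreover have "?Ds \<noteq> {}" using assms(2) by auto
  ultimately have "diam V E \<in> ?Ds" unfolding diam_def by (rule Max_in)
  thus ?thesis using that by auto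
qed

lemma mu_t_attained:
  assumes "finite V" "graph_connected V E"
  obtains X where "total_mutual_visibility_set V E X" "card X = mu_t V E"
proof -
  let ?S = "{card X | X. total_mutual_visibility_set V E X}"
  have "?S \<subseteq> card ` Pow V" by (auto simp: total_mutual_visibility_set_def)
  hence "finite ?S" using assms(1) finite_subset by blast
  moreover have "total_mutual_visibility_set V E {}"
    using assms(2) shortest_path_exists
    by (fastforce simp: total_mutual_visibility_set_def X_visible_def graph_connected_def)
  hence "?S \<noteq> {}" by auto
  ultimately have "mu_t V E \<in> ?S" unfolding mu_t_def by (rule Max_in)
  thus ?thesis using that by auto
qed

lemma gamma_c_le_card:
  assumes "finite V" "connected_dominating_set V E D"
  shows "gamma_c V E \<le> card D"
proof -
  have "{card D | D. connected_dominating_set V E D} \<subseteq> card ` Pow V"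
    by (auto simp: connected_dominating_set_def dominating_set_def)
  hence "finite {card D | D. connected_dominating_set V E D}"
    using assms(1) finite_subset by blast
  thus ?thesis unfolding gamma_c_def using assms(2) by (auto intro: Min_le)
qed

lemma gamma_c_attained:
  assumes "simple_graph V E" "graph_connected V E"
  obtains C where "connected_dominating_set V E C" "card C = gamma_c V E"
proof -
  let ?T = "{card D | D. connected_dominating_set V E D}"
  have "?T \<subseteq> card ` Pow V" by (auto simp: connected_dominating_set_def dominating_set_def)
  moreover have "finite V" using assms(1) by (simp add: simple_graph_def)
  ultimately have "finite ?T" using finite_subset by blast
  moreover have "induced_edges E V = E"
    using assms(1) by (auto simp: induced_edges_def simple_graph_def fun_eq_iff)
  hence "connected_dominating_set V E V"
    using assms(2) by (auto simp: connected_dominating_set_def dominating_set_def)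
  hence "?T \<noteq> {}" by auto
  ultimately have "gamma_c V E \<in> ?T" unfolding gamma_c_def by (rule Min_in)
  thus ?thesis using that by auto
qed

lemma path_mem_cases:
  assumes "z \<in> set p"
  shows "z = hd p \<or> z = last p \<or> z \<in> set (butlast (tl p))"
proof (cases p)
  case (Cons a rest)
  then show ?thesis using assms by (cases rest rule: rev_cases) auto
qed (use assms in simp)

lemma path_between_nonadjacent_internal:
  assumes "path_between V E x y p" "x \<noteq> y" "\<not> E x y"
  shows "\<exists>w \<in> set (butlast (tl p)). E x w \<and> w \<in> V"
proof -
  from assms(1) obtain r where p: "p = x # r"
    by (cases p) (auto simp: path_between_def is_path_def)
  obtain w r' where r: "r = w # r'"
    using assms(1,2) p by (cases r) (auto simp: path_between_def)
  have "r' \<noteq> []" using assms(1,3) p r by (auto simp: path_between_def is_path_def)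
  thus ?thesis using assms(1) p r by (auto simp: path_between_def is_path_def)
qed

lemma visible_nonneighbour_gives_neighbour_outside:
  assumes "X_visible V E X x y" "x \<noteq> y" "\<not> E x y"
  shows "\<exists>w \<in> V - X. E x w"
proof -
  obtain p where "path_between V E x y p" "\<forall>v \<in> set (butlast (tl p)). v \<notin> X"
    using assms(1) by (auto simp: X_visible_def shortest_path_def)
  thus ?thesis using path_between_nonadjacent_internal[of V E x y p] assms(2,3) by blast
qed

lemma complement_tmv_dominating:
  assumes "simple_graph V E" "\<not> complete_graph V E" "total_mutual_visibility_set V E X"
  shows "dominating_set V E (V - X)"
proof -
  have vis: "\<And>x y. x \<in> V \<Longrightarrow> y \<in> V \<Longrightarrow> X_visible V E X x y"
    using assms(3) by (auto simp: total_mutual_visibility_set_def)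
  have sym: "\<And>x y. E x y \<Longrightarrow> E y x" using assms(1) by (auto simp: simple_graph_def)
  obtain x0 y0 where "x0 \<in> V" "y0 \<in> V" "x0 \<noteq> y0" "\<not> E x0 y0"
    using assms(2) by (auto simp: complete_graph_def)
  then obtain d where d: "d \<in> V - X"
    using visible_nonneighbour_gives_neighbour_outside[OF vis] by blast
  have "\<exists>u \<in> V - X. E u v" if v: "v \<in> X" "v \<in> V" for v
  proof (cases "\<exists>y \<in> V. y \<noteq> v \<and> \<not> E v y")
    case True
    then obtain y where "y \<in> V" "y \<noteq> v" "\<not> E v y" by blast
    then obtain w where "w \<in> V - X" "E v w"
      using visible_nonneighbour_gives_neighbour_outside[OF vis[OF v(2)]] by blast
    thus ?thesis using sym by blast
  next
    case False
    hence "E v d" using d v(1) by auto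
    thus ?thesis using d sym by blast
  qed
  thus ?thesis unfolding dominating_set_def by blast
qed

lemma complement_tmv_connected:
  assumes "total_mutual_visibility_set V E X" "V - X \<noteq> {}"
  shows "graph_connected (V - X) (induced_edges E (V - X))"
  unfolding graph_connected_def
proof (intro conjI ballI)
  fix a b assume ab: "a \<in> V - X" "b \<in> V - X"
  hence "X_visible V E X a b" using assms(1) by (simp add: total_mutual_visibility_set_def)
  then obtain p where p: "path_between V E a b p" "\<forall>v \<in> set (butlast (tl p)). v \<notin> X"
    by (auto simp: X_visible_def shortest_path_def)
  have "set p \<subseteq> V - X"
  proof
    fix z assume "z \<in> set p"
    thus "z \<in> V - X" using path_mem_cases[of z p] p ab by (auto simp: path_between_def is_path_def)
  qed
  thus "\<exists>p. path_between (V - X) (induced_edges E (V - X)) a b p"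
    using p(1) path_between_induced_iff[of "V - X" V] by blast
qed (fact assms(2))

lemma complement_tmv_connected_dominating:
  assumes "simple_graph V E" "\<not> complete_graph V E" "total_mutual_visibility_set V E X"
  shows "connected_dominating_set V E (V - X)"
proof -
  have "dominating_set V E (V - X)" using complement_tmv_dominating[OF assms] .
  moreover have "V - X \<noteq> {}"
    using calculation assms(2) by (auto simp: dominating_set_def complete_graph_def)
  ultimately show ?thesis
    using complement_tmv_connected[OF assms(3)] by (simp add: connected_dominating_set_def)
qed

lemma dist_le_connected_dominating_card:
  assumes "simple_graph V E" "graph_connected V E" "connected_dominating_set V E C"
    and "x \<in> V" "y \<in> V"
  shows "dist V E x y \<le> card C + 1"
proof -
  have sym: "symp E" using assms(1) by (auto simp: simple_graph_def symp_def)
  have conn: "\<And>a b. a \<in> V \<Longrightarrow> b \<in> V \<Longrightarrow> \<exists>p. path_between V E a b p"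
    using assms(2) by (auto simp: graph_connected_def)
  have CV: "C \<subseteq> V" and dom: "\<And>v. v \<in> V \<Longrightarrow> v \<in> C \<or> (\<exists>u \<in> C. E u v)"
    using assms(3) by (auto simp: connected_dominating_set_def dominating_set_def)
  have finC: "finite C" using CV assms(1) finite_subset by (auto simp: simple_graph_def)
  obtain x' where x': "x' \<in> C" "x' = x \<or> E x x'" using dom[OF assms(4)] sym by (metis sympD)
  obtain y' where y': "y' \<in> C" "y' = y \<or> E y y'" using dom[OF assms(5)] sym by (metis sympD)
  obtain q where "path_between C (induced_edges E C) x' y' q"
    using assms(3) x'(1) y'(1) by (auto simp: connected_dominating_set_def graph_connected_def)
  hence q: "path_between V E x' y' q" "set q \<subseteq> C"
    using path_between_induced_iff[OF CV] by auto
  have "length q = card (set q)" using q(1) by (auto simp: path_between_def is_path_def distinct_card)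
  also have "\<dots> \<le> card C" using q(2) finC by (rule card_mono[rotated])
  finally have "dist V E x' y' + 1 \<le> card C" using dist_le_length[OF q(1)] q(1)
    by (cases q) (auto simp: path_between_def is_path_def)
  moreover have "dist V E x y' \<le> dist V E x' y' + 1"
    using x'(2) dist_neighbour_le[OF _ assms(4) q(1)] by auto
  moreover have "dist V E x y \<le> dist V E x y' + 1"
  proof (cases "y' = y")
    case False
    obtain r where r: "path_between V E y' x r" using conn CV y'(1) assms(4) by blast
    obtain r' where r': "path_between V E y x r'" using conn assms(4,5) by blast
    have "dist V E x y = dist V E y x" using dist_commute[OF sym r'] by simp
    also have "\<dots> \<le> dist V E y' x + 1" using False y'(2) dist_neighbour_le[OF _ assms(5) r] by auto
    also have "dist V E y' x = dist V E x y'" using dist_commute[OF sym r] .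
    finally show ?thesis .
  qed simp
  ultimately show ?thesis by linarith
qed

theorem corollary2p5:
  fixes V :: "'a set" and E :: "'a \<Rightarrow> 'a \<Rightarrow> bool"
  assumes "simple_graph V E"
    and "graph_connected V E"
    and "\<not> complete_graph V E"
    and "mu_t V E = card V - diam V E + 1"
  shows "gamma_c V E = diam V E - 1"
proof -
  have fin: "finite V" using assms(1) by (simp add: simple_graph_def)
  obtain X where X: "total_mutual_visibility_set V E X" "card X = mu_t V E"
    using mu_t_attained[OF fin assms(2)] .
  have "X \<subseteq> V" using X(1) by (simp add: total_mutual_visibility_set_def)
  hence "card (V - X) = card V - mu_t V E"
    using X(2) card_Diff_subset finite_subset[OF _ fin] by metis
  moreover have "gamma_c V E \<le> card (V - X)"
    using gamma_c_le_card[OF fin complement_tmv_connected_dominating[OF assms(1,3) X(1)]] .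
  moreover have "diam V E \<le> gamma_c V E + 1"
  proof -
    obtain C where C: "connected_dominating_set V E C" "card C = gamma_c V E"
      using gamma_c_attained[OF assms(1,2)] .
    obtain x y where "x \<in> V" "y \<in> V" "diam V E = dist V E x y"
      using diam_attained[OF fin] assms(2) by (auto simp: graph_connected_def)
    thus ?thesis using dist_le_connected_dominating_card[OF assms(1,2) C(1)] C(2) by simp
  qed
  ultimately show ?thesis using assms(4) \<open>X \<subseteq> V\<close> card_mono[OF fin] by linarith
qed

end
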